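(* Let $c\in\mathbb{C}$ and let $\mathbf{u},\widehat{\mathbf{u}}$ be quasi-definite linear functionals with $\mathbf{u}=(x-c)^2\widehat{\mathbf{u}}$, SMOPs $(P_n)$ and $(Q_n)$, and monic Jacobi matrices $J$ and $\widehat J$. Write $Q_n=P_n+\alpha_{n,n-1}P_{n-1}+\alpha_{n,n-2}P_{n-2}$ ($n\ge1$, with $P_{-1}=0$) and $(x-c)^2P_n=Q_{n+2}+\beta_{n,n+1}Q_{n+1}+\beta_{n,n}Q_n$ ($n\ge0$). Then $W(Q_{n+1},Q_n)(c)\ne0$ for all $n\ge0$, $$\beta_{n,n}=\frac{W(Q_{n+1},Q_{n+2})(c)}{W(Q_n,Q_{n+1})(c)}\neq0,\qquad \beta_{n,n+1}=-\frac{W(Q_n,Q_{n+2})(c)}{W(Q_n,Q_{n+1})(c)},$$ and, with $L$ the semi-infinite lower triangular matrix with $L_{n,n}=1$, $L_{n,n-1}=\alpha_{n,n-1}$, $L_{n,n-2}=\alpha_{n,n-2}$ and all other entries $0$, and $U$ the semi-infinite upper triangular matrix with $U_{n,n}=\beta_{n,n}$, $U_{n,n+1}=\beta_{n,n+1}$, $U_{n,n+2}=1$ and all other entries $0$, $$(J-cI)^2=UL,\qquad (\widehat J-cI)^2=LU.$$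
   Context: Quasi-definite functional: all leading principal submatrices of the Hankel moment matrix are nonsingular; it has a unique sequence of monic orthogonal polynomials (SMOP) $(P_n)$ with $xP_n=P_{n+1}+b_nP_n+a_nP_{n-1}$, $P_{-1}=0$, $P_0=1$, $a_n\ne0$. The monic Jacobi matrix is the semi-infinite tridiagonal matrix with diagonal $(b_0,b_1,\dots)$, superdiagonal entries $1$ and subdiagonal $(a_1,a_2,\dots)$, so that $x\mathbf{P}=J\mathbf{P}$ for $\mathbf{P}=(P_0,P_1,\dots)^\top$. $\langle(x-c)^2\widehat{\mathbf{u}},p\rangle=\langle\widehat{\mathbf{u}},(x-c)^2p\rangle$. Wronskian: $W(p,q)(x)=p(x)q'(x)-p'(x)q(x)$. *)

theory Defs
  imports "HOL-Computational_Algebra.Polynomial" "Jordan_Normal_Form.Determinant"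
begin

definition lin_functional :: "(complex poly \<Rightarrow> complex) \<Rightarrow> bool" where
  "lin_functional u \<longleftrightarrow> (\<forall>p q. u (p + q) = u p + u q) \<and> (\<forall>a p. u (smult a p) = a * u p)"

definition quasi_definite :: "(complex poly \<Rightarrow> complex) \<Rightarrow> bool" where
  "quasi_definite u \<longleftrightarrow> lin_functional u \<and>
     (\<forall>n. det (mat (Suc n) (Suc n) (\<lambda>(i, j). u (monom 1 (i + j)))) \<noteq> 0)"

definition mult_sq :: "complex \<Rightarrow> (complex poly \<Rightarrow> complex) \<Rightarrow> (complex poly \<Rightarrow> complex)" where
  "mult_sq c u = (\<lambda>p. u ([:-c, 1:]^2 * p))"

definition is_SMOP :: "(complex poly \<Rightarrow> complex) \<Rightarrow> (nat \<Rightarrow> complex poly) \<Rightarrow> bool" where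
  "is_SMOP u P \<longleftrightarrow> (\<forall>n. degree (P n) = n \<and> lead_coeff (P n) = 1) \<and>
     (\<forall>m n. m \<noteq> n \<longrightarrow> u (P m * P n) = 0) \<and> (\<forall>n. u (P n * P n) \<noteq> 0)"

definition three_term :: "(nat \<Rightarrow> complex poly) \<Rightarrow> (nat \<Rightarrow> complex) \<Rightarrow> (nat \<Rightarrow> complex) \<Rightarrow> bool" where
  "three_term P a b \<longleftrightarrow> (\<forall>n. [:0, 1:] * P n =
      P (Suc n) + smult (b n) (P n) + (if n = 0 then 0 else smult (a n) (P (n - 1))))"

text \<open>Semi-infinite matrices are functions nat => nat => complex (row, column).\<close>
type_synonym imat = "nat \<Rightarrow> nat \<Rightarrow> complex"

definition monic_jacobi :: "(nat \<Rightarrow> complex) \<Rightarrow> (nat \<Rightarrow> complex) \<Rightarrow> imat" where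
  "monic_jacobi a b = (\<lambda>i j. if j = i then b i else if j = Suc i then 1
       else if i = Suc j then a i else 0)"

definition imat_id :: imat where "imat_id = (\<lambda>i j. if i = j then 1 else 0)"

definition imat_minus :: "imat \<Rightarrow> imat \<Rightarrow> imat" where
  "imat_minus A B = (\<lambda>i j. A i j - B i j)"

definition imat_smult :: "complex \<Rightarrow> imat \<Rightarrow> imat" where
  "imat_smult c A = (\<lambda>i j. c * A i j)"

text \<open>Product of semi-infinite matrices, for row-finite left factor (all matrices here are banded).\<close>
definition imat_mult :: "imat \<Rightarrow> imat \<Rightarrow> imat" where
  "imat_mult A B = (\<lambda>i j. \<Sum>k\<in>{k. A i k \<noteq> 0}. A i k * B k j)"

definition wronskian :: "complex poly \<Rightarrow> complex poly \<Rightarrow> complex \<Rightarrow> complex" where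
  "wronskian p q x = poly p x * poly (pderiv q) x - poly (pderiv p) x * poly q x"

end

theory Submission
  imports Defs
begin

text \<open>
  Since (x - c)^2 P_n vanishes to second order at c, and the Wronskian at c is bilinear,
  antisymmetric and kills every multiple of (x - c)^2, pairing the relation
  (x - c)^2 P_n = Q_{n+2} + beta_{n,n+1} Q_{n+1} + beta_{n,n} Q_n with Q_n and with Q_{n+1}
  gives both coefficients as quotients of Wronskians. The denominator W(Q_n, Q_{n+1})(c) is
  nonzero: otherwise some nontrivial combination s Q_{n+1} + t Q_n equals (x - c)^2 r with
  deg r < n, and then u(r P_{deg r}) = uh((s Q_{n+1} + t Q_n) P_{deg r}) = 0 contradicts the
  quasi-definiteness of u.

  The matrix identities are read off polynomial sequences: a row-finite matrix A acts on a
  sequence by (A P)_i = sum_j A_{ij} P_j; this action is compatible with matrix products and,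
  the P_n being linearly independent, injective. As (J - cI) P = (x - c) P, L P = Q and
  U Q = (x - c)^2 P, we get (J - cI)^2 P = U L P and (Jh - cI)^2 Q = (x - c)^2 L P = L U Q.
\<close>

lemma lin_functional_add: "lin_functional u \<Longrightarrow> u (p + q) = u p + u q"
  unfolding lin_functional_def by blast

lemma lin_functional_smult: "lin_functional u \<Longrightarrow> u (smult a p) = a * u p"
  unfolding lin_functional_def by blast

lemma lin_functional_zero: "lin_functional u \<Longrightarrow> u 0 = 0"
  using lin_functional_smult[of u 0 0] by simp

lemma lin_functional_sum: "lin_functional u \<Longrightarrow> u (sum f A) = (\<Sum>x\<in>A. u (f x))"
  by (induct A rule: infinite_finite_induct) (simp_all add: lin_functional_zero lin_functional_add)

lemma smult_sum_right: "smult a (sum f A) = (\<Sum>x\<in>A. smult a (f x))"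
  by (induct A rule: infinite_finite_induct) (simp_all add: smult_add_right)

lemma SMOP_0_eq_1: "is_SMOP u P \<Longrightarrow> P 0 = 1"
  unfolding is_SMOP_def by (metis degree_0_id one_pCons)

lemma SMOP_degree_reduce:
  fixes p :: "complex poly"
  assumes "is_SMOP u P"
  defines "q \<equiv> p - smult (lead_coeff p) (P (degree p))"
  shows "q = 0 \<or> degree q < degree p"
proof -
  have P: "degree (P (degree p)) = degree p" "lead_coeff (P (degree p)) = 1"
    using assms(1) unfolding is_SMOP_def by blast+
  have "degree q \<le> degree p"
    unfolding q_def using P by (metis degree_diff_le degree_smult_le order_refl)
  moreover have "coeff q (degree p) = 0"
    unfolding q_def using P by simp
  ultimately show ?thesis
    by (metis le_neq_implies_less leading_coeff_0_iff)
qed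

lemma SMOP_orthogonal_lower_degree:
  assumes u: "lin_functional u" and P: "is_SMOP u P"
  shows "degree p < m \<Longrightarrow> u (P m * p) = 0"
proof (induction "degree p" arbitrary: p rule: less_induct)
  case less
  define q where "q = p - smult (lead_coeff p) (P (degree p))"
  have "u (P m * q) = 0"
    using SMOP_degree_reduce[OF P, of p] less lin_functional_zero[OF u]
    unfolding q_def[symmetric] by auto
  moreover have "u (P m * P (degree p)) = 0"
    using P less.prems unfolding is_SMOP_def by simp
  moreover have "P m * p = P m * q + smult (lead_coeff p) (P m * P (degree p))"
    by (simp add: q_def algebra_simps)
  ultimately show ?case
    by (simp add: lin_functional_add[OF u] lin_functional_smult[OF u])
qed

lemma SMOP_nondegenerate:
  assumes u: "lin_functional u" and P: "is_SMOP u P" and "r \<noteq> 0"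
  shows "u (r * P (degree r)) \<noteq> 0"
proof -
  define d where "d = degree r"
  define q where "q = r - smult (lead_coeff r) (P d)"
  have "u (P d * q) = 0"
    using SMOP_degree_reduce[OF P, of r] SMOP_orthogonal_lower_degree[OF u P]
      lin_functional_zero[OF u] unfolding q_def d_def by auto
  moreover have "r * P d = P d * q + smult (lead_coeff r) (P d * P d)"
    by (simp add: q_def algebra_simps)
  ultimately have "u (r * P d) = lead_coeff r * u (P d * P d)"
    by (simp add: lin_functional_add[OF u] lin_functional_smult[OF u])
  moreover have "u (P d * P d) \<noteq> 0"
    using P unfolding is_SMOP_def by blast
  ultimately show ?thesis
    using \<open>r \<noteq> 0\<close> by (simp add: d_def)
qed

lemma SMOP_linear_independent:
  assumes u: "lin_functional u" and P: "is_SMOP u P"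
    and "finite S" "m \<in> S" "(\<Sum>k\<in>S. smult (f k) (P k)) = 0"
  shows "f m = 0"
proof -
  have "0 = u ((\<Sum>k\<in>S. smult (f k) (P k)) * P m)"
    using assms(5) lin_functional_zero[OF u] by simp
  also have "\<dots> = (\<Sum>k\<in>S. if k = m then f m * u (P m * P m) else 0)"
    using P unfolding is_SMOP_def
    by (auto simp: sum_distrib_right lin_functional_sum[OF u] lin_functional_smult[OF u]
        intro!: sum.cong)
  also have "\<dots> = f m * u (P m * P m)"
    using assms(3,4) by simp
  finally show ?thesis
    using P unfolding is_SMOP_def by simp
qed

text \<open>Meaningful for row-finite A only: over an infinite support the sum is 0.\<close>
definition imat_vec_mult :: "imat \<Rightarrow> (nat \<Rightarrow> complex poly) \<Rightarrow> nat \<Rightarrow> complex poly" where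
  "imat_vec_mult A P = (\<lambda>i. \<Sum>j\<in>{j. A i j \<noteq> 0}. smult (A i j) (P j))"

definition row_finite :: "imat \<Rightarrow> bool" where
  "row_finite A \<longleftrightarrow> (\<forall>i. finite {j. A i j \<noteq> 0})"

lemma row_finite_if_banded: "(\<And>i j. A i j \<noteq> 0 \<Longrightarrow> j \<le> i + k) \<Longrightarrow> row_finite A"
  unfolding row_finite_def by (blast intro: finite_subset[OF _ finite_atMost])

lemma imat_vec_mult_eq_sum:
  "finite S \<Longrightarrow> {j. A i j \<noteq> 0} \<subseteq> S \<Longrightarrow> imat_vec_mult A P i = (\<Sum>j\<in>S. smult (A i j) (P j))"
  unfolding imat_vec_mult_def by (rule sum.mono_neutral_left) auto

lemma imat_vec_mult_mult_left: "imat_vec_mult A (\<lambda>k. p * P k) = (\<lambda>i. p * imat_vec_mult A P i)"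
  by (simp add: imat_vec_mult_def sum_distrib_left)

lemma imat_mult_row_support:
  "{j. imat_mult A B i j \<noteq> 0} \<subseteq> (\<Union>k\<in>{k. A i k \<noteq> 0}. {j. B k j \<noteq> 0})"
proof
  fix j assume "j \<in> {j. imat_mult A B i j \<noteq> 0}"
  then obtain k where "A i k \<noteq> 0" "A i k * B k j \<noteq> 0"
    unfolding imat_mult_def by (meson sum.neutral mem_Collect_eq)
  then show "j \<in> (\<Union>k\<in>{k. A i k \<noteq> 0}. {j. B k j \<noteq> 0})"
    by auto
qed

lemma row_finite_imat_mult:
  assumes "row_finite A" "row_finite B"
  shows "row_finite (imat_mult A B)"
  unfolding row_finite_def
proof
  fix i
  show "finite {j. imat_mult A B i j \<noteq> 0}"
    by (rule finite_subset[OF imat_mult_row_support]) (use assms in \<open>simp add: row_finite_def\<close>)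
qed

lemma imat_vec_mult_imat_mult:
  assumes A: "row_finite A" and B: "row_finite B"
  shows "imat_vec_mult (imat_mult A B) P = imat_vec_mult A (imat_vec_mult B P)"
proof
  fix i
  define K where "K = {k. A i k \<noteq> 0}"
  define S where "S = (\<Union>k\<in>K. {j. B k j \<noteq> 0})"
  have K: "finite K" and S: "finite S"
    using A B unfolding K_def S_def row_finite_def by auto
  have "imat_vec_mult A (imat_vec_mult B P) i
      = (\<Sum>k\<in>K. smult (A i k) (\<Sum>j\<in>S. smult (B k j) (P j)))"
    unfolding imat_vec_mult_def[of A] K_def[symmetric]
    using S by (intro sum.cong refl arg_cong[where f = "smult _"] imat_vec_mult_eq_sum)
      (auto simp: S_def)
  also have "\<dots> = (\<Sum>j\<in>S. smult (\<Sum>k\<in>K. A i k * B k j) (P j))"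
    by (simp add: smult_sum_right smult_sum sum.swap[of _ K])
  also have "\<dots> = (\<Sum>j\<in>S. smult (imat_mult A B i j) (P j))"
    using K by (simp add: imat_mult_def K_def)
  also have "\<dots> = imat_vec_mult (imat_mult A B) P i"
    using S imat_mult_row_support[of A B i] unfolding K_def S_def
    by (intro imat_vec_mult_eq_sum[symmetric])
  finally show "imat_vec_mult (imat_mult A B) P i = imat_vec_mult A (imat_vec_mult B P) i" ..
qed

lemma imat_vec_mult_inject:
  assumes u: "lin_functional u" and P: "is_SMOP u P"
    and A: "row_finite A" and B: "row_finite B" and AB: "imat_vec_mult A P = imat_vec_mult B P"
  shows "A = B"
proof (intro ext)
  fix i j
  define S where "S = insert j ({k. A i k \<noteq> 0} \<union> {k. B i k \<noteq> 0})"
  have S: "finite S"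
    using A B unfolding S_def row_finite_def by simp
  have "imat_vec_mult A P i = (\<Sum>k\<in>S. smult (A i k) (P k))"
    by (rule imat_vec_mult_eq_sum[OF S]) (auto simp: S_def)
  moreover have "imat_vec_mult B P i = (\<Sum>k\<in>S. smult (B i k) (P k))"
    by (rule imat_vec_mult_eq_sum[OF S]) (auto simp: S_def)
  ultimately have "(\<Sum>k\<in>S. smult (A i k - B i k) (P k))
      = imat_vec_mult A P i - imat_vec_mult B P i"
    by (simp add: smult_diff_left sum_subtractf)
  also have "\<dots> = 0"
    using AB by simp
  finally have "(\<Sum>k\<in>S. smult (A i k - B i k) (P k)) = 0" .
  moreover have "j \<in> S"
    by (simp add: S_def)
  ultimately have "A i j - B i j = 0"
    by (rule SMOP_linear_independent[OF u P S, rotated])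
  then show "A i j = B i j"
    by simp
qed

lemma wronskian_add_right: "wronskian p (q + r) x = wronskian p q x + wronskian p r x"
  by (simp add: wronskian_def pderiv_add algebra_simps)

lemma wronskian_smult_right: "wronskian p (smult a q) x = a * wronskian p q x"
  by (simp add: wronskian_def pderiv_smult algebra_simps)

lemma wronskian_swap: "wronskian q p x = - wronskian p q x"
  by (simp add: wronskian_def)

lemma wronskian_self: "wronskian p p x = 0"
  by (simp add: wronskian_def)

lemma linear_square_dvd_iff:
  fixes R :: "'a::idom poly"
  shows "[:-c, 1:]^2 dvd R \<longleftrightarrow> poly R c = 0 \<and> poly (pderiv R) c = 0"
proof
  have X': "pderiv [:-c, 1:] = (1 :: 'a poly)"
    by (simp add: pderiv_pCons)
  {
    assume "[:-c, 1:]^2 dvd R"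
    then obtain r where "R = [:-c, 1:]^2 * r"
      by (rule dvdE)
    then have R: "R = [:-c, 1:] * ([:-c, 1:] * r)"
      by (simp only: power2_eq_square mult.assoc)
    then have "pderiv R = [:-c, 1:] * (pderiv ([:-c, 1:] * r) + r)"
      by (simp only: pderiv_mult X' mult_1_right distrib_left)
    then show "poly R c = 0 \<and> poly (pderiv R) c = 0"
      using R by (simp only: poly_mult) simp
  next
    assume R: "poly R c = 0 \<and> poly (pderiv R) c = 0"
    then obtain R1 where R1: "R = [:-c, 1:] * R1"
      by (auto simp: poly_eq_0_iff_dvd)
    then have "pderiv R = R1 + [:-c, 1:] * pderiv R1"
      by (simp only: pderiv_mult X' mult_1_right add.commute)
    then have "poly R1 c = 0"
      using R by (simp only: poly_add poly_mult) simp
    then obtain R2 where "R1 = [:-c, 1:] * R2"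
      by (auto simp: poly_eq_0_iff_dvd)
    then have "R = [:-c, 1:]^2 * R2"
      using R1 by (simp only: power2_eq_square mult.assoc)
    then show "[:-c, 1:]^2 dvd R"
      by (rule dvdI)
  }
qed

lemma wronskian_linear_square_dvd_right: "[:-c, 1:]^2 dvd q \<Longrightarrow> wronskian p q c = 0"
  by (simp add: wronskian_def linear_square_dvd_iff)

lemma double_root_combination_coeffs:
  assumes "[:-c, 1:]^2 dvd p2 + smult b1 p1 + smult b0 p0" and "wronskian p0 p1 c \<noteq> 0"
  shows "b0 = wronskian p1 p2 c / wronskian p0 p1 c"
    and "b1 = - (wronskian p0 p2 c / wronskian p0 p1 c)"
proof -
  have "wronskian p0 p2 c + b1 * wronskian p0 p1 c = 0"
    using wronskian_linear_square_dvd_right[OF assms(1), of p0]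
    by (simp add: wronskian_add_right wronskian_smult_right wronskian_self)
  moreover have "wronskian p1 p2 c - b0 * wronskian p0 p1 c = 0"
    using wronskian_linear_square_dvd_right[OF assms(1), of p1]
    by (simp add: wronskian_add_right wronskian_smult_right wronskian_self wronskian_swap[of p1 p0])
  ultimately show "b0 = wronskian p1 p2 c / wronskian p0 p1 c"
    and "b1 = - (wronskian p0 p2 c / wronskian p0 p1 c)"
    using assms(2) by (simp_all add: field_simps eq_neg_iff_add_eq_0)
qed

lemma wronskian_eq_0_imp_double_root:
  assumes "wronskian p q c = 0"
  obtains s t where "s \<noteq> 0 \<or> t \<noteq> 0" "[:-c, 1:]^2 dvd smult s p + smult t q"
proof -
  have double_root: "[:-c, 1:]^2 dvd smult s p + smult t q"
    if "s * poly p c + t * poly q c = 0" "s * poly (pderiv p) c + t * poly (pderiv q) c = 0" for s t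
    using that by (simp add: linear_square_dvd_iff pderiv_add pderiv_smult)
  consider "poly p c \<noteq> 0 \<or> poly q c \<noteq> 0" | "poly (pderiv p) c \<noteq> 0 \<or> poly (pderiv q) c \<noteq> 0"
    | "poly p c = 0" "poly (pderiv p) c = 0"
    by blast
  then show thesis
  proof cases
    case 1
    then show thesis
      using that[OF _ double_root, of "poly q c" "- poly p c"] assms
      by (auto simp: wronskian_def algebra_simps)
  next
    case 2
    then show thesis
      using that[OF _ double_root, of "poly (pderiv q) c" "- poly (pderiv p) c"] assms
      by (auto simp: wronskian_def algebra_simps)
  next
    case 3
    then show thesis
      using that[OF _ double_root, of 1 0] by simp
  qed
qed

lemma wronskian_consecutive_SMOP_nonzero:
  assumes u: "lin_functional u" and uh: "lin_functional uh" and u_eq: "u = mult_sq c uh"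
    and P: "is_SMOP u P" and Q: "is_SMOP uh Q"
  shows "wronskian (Q (n + 1)) (Q n) c \<noteq> 0"
proof
  assume "wronskian (Q (n + 1)) (Q n) c = 0"
  then obtain s t where st: "s \<noteq> 0 \<or> t \<noteq> 0"
    and "[:-c, 1:]^2 dvd smult s (Q (n + 1)) + smult t (Q n)"
    by (rule wronskian_eq_0_imp_double_root)
  define R where "R = smult s (Q (n + 1)) + smult t (Q n)"
  obtain r where r: "R = [:-c, 1:]^2 * r"
    using \<open>[:-c, 1:]^2 dvd _\<close> unfolding R_def[symmetric] by (rule dvdE)
  have degQ: "degree (Q m) = m" "coeff (Q m) m = 1" for m
    using Q unfolding is_SMOP_def by metis+
  have "R \<noteq> 0"
  proof (cases "s = 0")
    case True
    then show ?thesis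
      using st degQ(2)[of n] by (auto simp: R_def)
  next
    case False
    then show ?thesis
      using degQ by (auto simp: R_def coeff_eq_0 dest: arg_cong[where f = "\<lambda>p. coeff p (n + 1)"])
  qed
  then have "r \<noteq> 0"
    using r by auto
  have "degree R \<le> n + 1"
    unfolding R_def using degQ(1)
    by (metis degree_add_le degree_smult_le le_SucI Suc_eq_plus1)
  moreover have "degree R = degree r + 2"
    using r \<open>r \<noteq> 0\<close> by (simp add: degree_mult_eq degree_power_eq)
  ultimately have deg_r: "degree r < n"
    by simp
  define d where "d = degree r"
  have degP: "degree (P d) < n"
    using P deg_r unfolding is_SMOP_def d_def by simp
  have "u (r * P d) = uh (R * P d)"
    by (simp add: u_eq mult_sq_def r mult.assoc)
  also have "\<dots> = s * uh (Q (n + 1) * P d) + t * uh (Q n * P d)"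
    by (simp add: R_def distrib_right lin_functional_add[OF uh] lin_functional_smult[OF uh])
  also have "\<dots> = 0"
    using degP SMOP_orthogonal_lower_degree[OF uh Q] by simp
  finally show False
    using SMOP_nondegenerate[OF u P \<open>r \<noteq> 0\<close>] by (simp add: d_def)
qed

definition shifted_jacobi :: "(nat \<Rightarrow> complex) \<Rightarrow> (nat \<Rightarrow> complex) \<Rightarrow> complex \<Rightarrow> imat" where
  "shifted_jacobi a b c = imat_minus (monic_jacobi a b) (imat_smult c imat_id)"

definition unit_lower_band :: "(nat \<Rightarrow> complex) \<Rightarrow> (nat \<Rightarrow> complex) \<Rightarrow> imat" where
  "unit_lower_band alpha1 alpha2 = (\<lambda>i j. if j = i then 1 else if Suc j = i then alpha1 i
     else if j + 2 = i then alpha2 i else 0)"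

definition upper_band :: "(nat \<Rightarrow> complex) \<Rightarrow> (nat \<Rightarrow> complex) \<Rightarrow> imat" where
  "upper_band beta0 beta1 = (\<lambda>i j. if j = i then beta0 i else if j = Suc i then beta1 i
     else if j = i + 2 then 1 else 0)"

lemma shifted_jacobi_entry:
  "shifted_jacobi a b c i j =
     (if j = i then b i - c else if j = Suc i then 1 else if i = Suc j then a i else 0)"
  by (simp add: shifted_jacobi_def imat_minus_def monic_jacobi_def imat_smult_def imat_id_def)

lemma row_finite_shifted_jacobi: "row_finite (shifted_jacobi a b c)"
  by (rule row_finite_if_banded[where k = 1]) (auto simp: shifted_jacobi_entry split: if_splits)

lemma row_finite_unit_lower_band: "row_finite (unit_lower_band alpha1 alpha2)"
  by (rule row_finite_if_banded[where k = 0]) (auto simp: unit_lower_band_def split: if_splits)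

lemma row_finite_upper_band: "row_finite (upper_band beta0 beta1)"
  by (rule row_finite_if_banded[where k = 2]) (auto simp: upper_band_def split: if_splits)

lemma imat_vec_mult_shifted_jacobi:
  assumes "three_term P a b"
  shows "imat_vec_mult (shifted_jacobi a b c) P = (\<lambda>n. [:-c, 1:] * P n)"
proof
  fix n
  have shift: "[:-c, 1:] * p = [:0, 1:] * p - smult c p" for p :: "complex poly"
    by (simp add: algebra_simps)
  show "imat_vec_mult (shifted_jacobi a b c) P n = [:-c, 1:] * P n"
  proof (cases n)
    case 0
    have "imat_vec_mult (shifted_jacobi a b c) P 0
        = (\<Sum>j\<in>{0, 1}. smult (shifted_jacobi a b c 0 j) (P j))"
      by (intro imat_vec_mult_eq_sum) (auto simp: shifted_jacobi_entry split: if_splits)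
    then show ?thesis
      using 0 assms unfolding three_term_def
      by (simp add: shift shifted_jacobi_entry smult_diff_left algebra_simps)
  next
    case (Suc m)
    have "imat_vec_mult (shifted_jacobi a b c) P n
        = (\<Sum>j\<in>{m, Suc m, Suc (Suc m)}. smult (shifted_jacobi a b c n j) (P j))"
      using Suc by (intro imat_vec_mult_eq_sum) (auto simp: shifted_jacobi_entry split: if_splits)
    then show ?thesis
      using Suc assms unfolding three_term_def
      by (simp add: shift shifted_jacobi_entry smult_diff_left algebra_simps)
  qed
qed

lemma imat_vec_mult_shifted_jacobi_square:
  assumes "three_term P a b"
  shows "imat_vec_mult (imat_mult (shifted_jacobi a b c) (shifted_jacobi a b c)) P
           = (\<lambda>n. [:-c, 1:]^2 * P n)"
proof -
  let ?J = "shifted_jacobi a b c"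
  have "imat_vec_mult (imat_mult ?J ?J) P = imat_vec_mult ?J (\<lambda>n. [:-c, 1:] * P n)"
    by (simp only: imat_vec_mult_imat_mult row_finite_shifted_jacobi
        imat_vec_mult_shifted_jacobi[OF assms])
  also have "\<dots> = (\<lambda>n. [:-c, 1:] * ([:-c, 1:] * P n))"
    by (simp only: imat_vec_mult_mult_left imat_vec_mult_shifted_jacobi[OF assms])
  finally show ?thesis
    by (simp only: power2_eq_square mult.assoc)
qed

lemma imat_vec_mult_unit_lower_band:
  assumes "\<forall>n\<ge>1. Q n = P n + smult (alpha1 n) (P (n - 1))
             + (if n \<ge> 2 then smult (alpha2 n) (P (n - 2)) else 0)"
    and "Q 0 = P 0"
  shows "imat_vec_mult (unit_lower_band alpha1 alpha2) P = Q"
proof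
  fix n
  let ?L = "unit_lower_band alpha1 alpha2"
  consider "n = 0" | "n = 1" | m where "n = Suc (Suc m)"
    by (metis One_nat_def not0_implies_Suc)
  then show "imat_vec_mult ?L P n = Q n"
  proof cases
    case 1
    then have "imat_vec_mult ?L P n = (\<Sum>j\<in>{0}. smult (?L n j) (P j))"
      by (intro imat_vec_mult_eq_sum) (auto simp: unit_lower_band_def split: if_splits)
    then show ?thesis
      using 1 assms(2) by (simp add: unit_lower_band_def)
  next
    case 2
    then have "imat_vec_mult ?L P n = (\<Sum>j\<in>{0, 1}. smult (?L n j) (P j))"
      by (intro imat_vec_mult_eq_sum) (auto simp: unit_lower_band_def split: if_splits)
    then show ?thesis
      using 2 assms(1) by (simp add: unit_lower_band_def)
  next
    case 3
    then have "imat_vec_mult ?L P n = (\<Sum>j\<in>{m, Suc m, Suc (Suc m)}. smult (?L n j) (P j))"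
      by (intro imat_vec_mult_eq_sum) (auto simp: unit_lower_band_def split: if_splits)
    then show ?thesis
      using 3 assms(1) by (simp add: unit_lower_band_def algebra_simps)
  qed
qed

lemma imat_vec_mult_upper_band:
  assumes "\<forall>n. R n = Q (n + 2) + smult (beta1 n) (Q (n + 1)) + smult (beta0 n) (Q n)"
  shows "imat_vec_mult (upper_band beta0 beta1) Q = R"
proof
  fix n
  have "imat_vec_mult (upper_band beta0 beta1) Q n
      = (\<Sum>j\<in>{n, Suc n, Suc (Suc n)}. smult (upper_band beta0 beta1 n j) (Q j))"
    by (intro imat_vec_mult_eq_sum) (auto simp: upper_band_def split: if_splits)
  then show "imat_vec_mult (upper_band beta0 beta1) Q n = R n"
    using assms by (simp add: upper_band_def algebra_simps)
qed

lemma shifted_jacobi_square_factorization: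
  assumes u: "lin_functional u" and P: "is_SMOP u P" and uh: "lin_functional uh" and Q: "is_SMOP uh Q"
    and P_rec: "three_term P a b" and Q_rec: "three_term Q ah bh"
    and L: "row_finite L" and U: "row_finite U"
    and LP: "imat_vec_mult L P = Q" and UQ: "imat_vec_mult U Q = (\<lambda>n. [:-c, 1:]^2 * P n)"
  shows "imat_mult (shifted_jacobi a b c) (shifted_jacobi a b c) = imat_mult U L"
    and "imat_mult (shifted_jacobi ah bh c) (shifted_jacobi ah bh c) = imat_mult L U"
proof -
  note row_finite = L U row_finite_shifted_jacobi row_finite_imat_mult
  show "imat_mult (shifted_jacobi a b c) (shifted_jacobi a b c) = imat_mult U L"
    by (rule imat_vec_mult_inject[OF u P])
      (simp_all only: row_finite imat_vec_mult_shifted_jacobi_square[OF P_rec]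
        imat_vec_mult_imat_mult LP UQ)
  show "imat_mult (shifted_jacobi ah bh c) (shifted_jacobi ah bh c) = imat_mult L U"
    by (rule imat_vec_mult_inject[OF uh Q])
      (simp_all only: row_finite imat_vec_mult_shifted_jacobi_square[OF Q_rec] imat_vec_mult_imat_mult
        UQ imat_vec_mult_mult_left LP)
qed

theorem mainTheorem5:
  fixes c :: complex
    and u uh :: "complex poly \<Rightarrow> complex"
    and P Q :: "nat \<Rightarrow> complex poly"
    and a b ah bh :: "nat \<Rightarrow> complex"
    and alpha1 alpha2 beta0 beta1 :: "nat \<Rightarrow> complex"
  assumes qd_u: "quasi_definite u"
    and qd_uh: "quasi_definite uh"
    and u_eq: "u = mult_sq c uh"
    and P_smop: "is_SMOP u P"
    and Q_smop: "is_SMOP uh Q"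
    and P_rec: "three_term P a b"
    and Q_rec: "three_term Q ah bh"
    and Q_exp: "\<forall>n\<ge>1. Q n = P n + smult (alpha1 n) (P (n - 1))
                      + (if n \<ge> 2 then smult (alpha2 n) (P (n - 2)) else 0)"
    and P_exp: "\<forall>n. [:-c, 1:]^2 * P n = Q (n + 2) + smult (beta1 n) (Q (n + 1)) + smult (beta0 n) (Q n)"
  defines "L \<equiv> (\<lambda>i j. if j = i then 1 else if Suc j = i then alpha1 i
                   else if j + 2 = i then alpha2 i else 0)"
    and "U \<equiv> (\<lambda>i j. if j = i then beta0 i else if j = Suc i then beta1 i
                   else if j = i + 2 then 1 else 0)"
    and "Jc \<equiv> imat_minus (monic_jacobi a b) (imat_smult c imat_id)"
    and "Jhc \<equiv> imat_minus (monic_jacobi ah bh) (imat_smult c imat_id)"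
  shows "(\<forall>n. wronskian (Q (n + 1)) (Q n) c \<noteq> 0)
    \<and> (\<forall>n. beta0 n = wronskian (Q (n + 1)) (Q (n + 2)) c / wronskian (Q n) (Q (n + 1)) c
           \<and> beta0 n \<noteq> 0)
    \<and> (\<forall>n. beta1 n = - (wronskian (Q n) (Q (n + 2)) c / wronskian (Q n) (Q (n + 1)) c))
    \<and> imat_mult Jc Jc = imat_mult U L
    \<and> imat_mult Jhc Jhc = imat_mult L U"
proof -
  have u: "lin_functional u" and uh: "lin_functional uh"
    using qd_u qd_uh unfolding quasi_definite_def by auto
  have W: "wronskian (Q (n + 1)) (Q n) c \<noteq> 0" for n
    by (rule wronskian_consecutive_SMOP_nonzero[OF u uh u_eq P_smop Q_smop])
  have W': "wronskian (Q n) (Q (n + 1)) c \<noteq> 0" for n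
    using W[of n] by (simp add: wronskian_swap[of "Q n"])
  have dvd: "[:-c, 1:]^2 dvd Q (n + 2) + smult (beta1 n) (Q (n + 1)) + smult (beta0 n) (Q n)" for n
    using P_exp by (metis dvd_triv_left)
  note beta = double_root_combination_coeffs[OF dvd W']
  have beta0_nonzero: "beta0 n \<noteq> 0" for n
    using W'[of "n + 1"] W'[of n] by (simp add: beta(1) numeral_2_eq_2)
  have matrices: "L = unit_lower_band alpha1 alpha2" "U = upper_band beta0 beta1"
    "Jc = shifted_jacobi a b c" "Jhc = shifted_jacobi ah bh c"
    by (simp_all add: L_def U_def Jc_def Jhc_def unit_lower_band_def upper_band_def
        shifted_jacobi_def)
  have "imat_vec_mult L P = Q"
    unfolding matrices using imat_vec_mult_unit_lower_band[OF Q_exp]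
    by (simp add: SMOP_0_eq_1[OF P_smop] SMOP_0_eq_1[OF Q_smop])
  moreover have "imat_vec_mult U Q = (\<lambda>n. [:-c, 1:]^2 * P n)"
    unfolding matrices using imat_vec_mult_upper_band[OF P_exp] .
  ultimately have "imat_mult Jc Jc = imat_mult U L" "imat_mult Jhc Jhc = imat_mult L U"
    using shifted_jacobi_square_factorization[OF u P_smop uh Q_smop P_rec Q_rec]
    by (simp_all add: matrices row_finite_unit_lower_band row_finite_upper_band)
  then show ?thesis
    using beta W beta0_nonzero by blast
qed

end
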